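(* Let $\mathbf{L}\in Q^2(\mathbb{D}^2)$. An analytic function $F\colon\mathbb{D}^2\to\mathbb{C}$ has bounded $\mathbf{L}$-index in joint variables if and only if there exist $p\in\mathbb{Z}_+$ and $c\in\mathbb{R}_+$ such that for each $z\in\mathbb{D}^2$ $$\max\left\{\frac{|F^{(j_1,j_2)}(z)|}{l_1^{j_1}(z)l_2^{j_2}(z)}: j_1+j_2=p+1\right\}\le c\max\left\{\frac{|F^{(k_1,k_2)}(z)|}{l_1^{k_1}(z)l_2^{k_2}(z)}: k_1+k_2\le p\right\}.$$
   Context: $\mathbb{D}^2=\{(z_1,z_2)\in\mathbb{C}^2:|z_1|<1,|z_2|<1\}$, $\mathbb{Z}_+=\{0,1,2,\dots\}$, $\mathbb{R}_+=[0,\infty)$. A constant $\beta>1$ is fixed. $\mathbf{L}(z)=(l_1(z),l_2(z))$, where each $l_j\colon\mathbb{D}^2\to\mathbb{R}_+$ is continuous and satisfies $l_j(z_1,z_2)>\beta/(1-|z_j|)$ for all $(z_1,z_2)\in\mathbb{D}^2$, $j=1,2$. For $z^0\in\mathbb{C}^2$ and $R=(r_1,r_2)\in\mathbb{R}_+^2$: $\mathbb{D}^2[z^0,R]=\{z:|z_j-z_j^0|\le r_j,\ j=1,2\}$ and $\frac{R}{\mathbf{L}(z^0)}=\big(\frac{r_1}{l_1(z^0)},\frac{r_2}{l_2(z^0)}\big)$. $F^{(p,q)}=\frac{\partial^{p+q}F}{\partial z_1^p\partial z_2^q}$. An analytic $F\colon\mathbb{D}^2\to\mathbb{C}$ has bounded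 $\mathbf{L}$-index in joint variables if there is $n_0\in\mathbb{Z}_+$ such that for all $z\in\mathbb{D}^2$ and all $(p_1,p_2)\in\mathbb{Z}_+^2$: $\frac{|F^{(p_1,p_2)}(z)|}{p_1!p_2!\,l_1^{p_1}(z)l_2^{p_2}(z)}\le\max\{\frac{|F^{(k_1,k_2)}(z)|}{k_1!k_2!\,l_1^{k_1}(z)l_2^{k_2}(z)}:0\le k_1+k_2\le n_0\}$. $Q^2(\mathbb{D}^2)$ is the class of such $\mathbf{L}$ for which, for all $R=(r_1,r_2)\in[0,\beta]^2$ and $j=1,2$, $0<\lambda_{1,j}(R)\le\lambda_{2,j}(R)<\infty$, where $\lambda_{1,j}(R)=\inf_{z^0\in\mathbb{D}^2}\inf\{l_j(z)/l_j(z^0): z\in\mathbb{D}^2[z^0,R/\mathbf{L}(z^0)]\}$ and $\lambda_{2,j}(R)=\sup_{z^0\in\mathbb{D}^2}\sup\{l_j(z)/l_j(z^0): z\in\mathbb{D}^2[z^0,R/\mathbf{L}(z^0)]\}$. *)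

theory Defs
  imports "HOL-Analysis.Analysis"
begin

definition D2 :: "(complex \<times> complex) set" where
  "D2 = {z. cmod (fst z) < 1 \<and> cmod (snd z) < 1}"

definition polydisc :: "complex \<times> complex \<Rightarrow> real \<times> real \<Rightarrow> (complex \<times> complex) set" where
  "polydisc z0 R = {z. cmod (fst z - fst z0) \<le> fst R \<and> cmod (snd z - snd z0) \<le> snd R}"

definition analytic2_on :: "(complex \<times> complex \<Rightarrow> complex) \<Rightarrow> (complex \<times> complex) set \<Rightarrow> bool" where
  "analytic2_on F S \<longleftrightarrow> open S \<and>
     (\<forall>z\<in>S. \<exists>a b. (F has_derivative (\<lambda>h. a * fst h + b * snd h)) (at z))"

definition pd1 :: "(complex \<times> complex \<Rightarrow> complex) \<Rightarrow> complex \<times> complex \<Rightarrow> complex" where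
  "pd1 F z = deriv (\<lambda>w. F (w, snd z)) (fst z)"

definition pd2 :: "(complex \<times> complex \<Rightarrow> complex) \<Rightarrow> complex \<times> complex \<Rightarrow> complex" where
  "pd2 F z = deriv (\<lambda>w. F (fst z, w)) (snd z)"

definition pderiv2 :: "(complex \<times> complex \<Rightarrow> complex) \<Rightarrow> nat \<Rightarrow> nat \<Rightarrow> complex \<times> complex \<Rightarrow> complex" where
  "pderiv2 F p q = (pd1 ^^ p) ((pd2 ^^ q) F)"

definition bounded_L_index :: "(complex \<times> complex \<Rightarrow> real) \<Rightarrow> (complex \<times> complex \<Rightarrow> real)
    \<Rightarrow> (complex \<times> complex \<Rightarrow> complex) \<Rightarrow> bool" where
  "bounded_L_index l1 l2 F \<longleftrightarrow>
    (\<exists>n0::nat. \<forall>z\<in>D2. \<forall>p1 p2::nat.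
       cmod (pderiv2 F p1 p2 z) / (fact p1 * fact p2 * l1 z ^ p1 * l2 z ^ p2)
       \<le> Max ((\<lambda>(k1, k2). cmod (pderiv2 F k1 k2 z) / (fact k1 * fact k2 * l1 z ^ k1 * l2 z ^ k2))
                ` {(k1, k2). k1 + k2 \<le> n0}))"

text \<open>lambda_{1,j}(R) and lambda_{2,j}(R), with values in the extended reals;
  lj is the component l_j.\<close>
definition lambda1 :: "(complex \<times> complex \<Rightarrow> real) \<Rightarrow> (complex \<times> complex \<Rightarrow> real)
    \<Rightarrow> (complex \<times> complex \<Rightarrow> real) \<Rightarrow> real \<times> real \<Rightarrow> ereal" where
  "lambda1 l1 l2 lj R = (INF z0\<in>D2. INF z\<in>D2 \<inter> polydisc z0 (fst R / l1 z0, snd R / l2 z0).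
                             ereal (lj z / lj z0))"

definition lambda2 :: "(complex \<times> complex \<Rightarrow> real) \<Rightarrow> (complex \<times> complex \<Rightarrow> real)
    \<Rightarrow> (complex \<times> complex \<Rightarrow> real) \<Rightarrow> real \<times> real \<Rightarrow> ereal" where
  "lambda2 l1 l2 lj R = (SUP z0\<in>D2. SUP z\<in>D2 \<inter> polydisc z0 (fst R / l1 z0, snd R / l2 z0).
                             ereal (lj z / lj z0))"

definition Q2 :: "real \<Rightarrow> (complex \<times> complex \<Rightarrow> real) \<Rightarrow> (complex \<times> complex \<Rightarrow> real) \<Rightarrow> bool" where
  "Q2 \<beta> l1 l2 \<longleftrightarrow>
    (\<forall>r1 r2. 0 \<le> r1 \<and> r1 \<le> \<beta> \<and> 0 \<le> r2 \<and> r2 \<le> \<beta> \<longrightarrow>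
       (\<forall>lj\<in>{l1, l2}. 0 < lambda1 l1 l2 lj (r1, r2) \<and>
                       lambda1 l1 l2 lj (r1, r2) \<le> lambda2 l1 l2 lj (r1, r2) \<and>
                       lambda2 l1 l2 lj (r1, r2) < \<infinity>))"

end

theory Submission
  imports Defs "HOL-Complex_Analysis.Complex_Analysis"
begin

text \<open>Necessity is elementary: bounded \<open>L\<close>-index with constant \<open>n\<^sub>0\<close> gives the inequality with
  \<open>p = n\<^sub>0\<close> and \<open>c = (n\<^sub>0 + 1)!\<close>, since \<open>j\<^sub>1! j\<^sub>2! \<le> (j\<^sub>1 + j\<^sub>2)!\<close>.

  For sufficiency, the inequality bounds every first-order partial derivative of a derivative of
  order at most \<open>p\<close> by the maximum of the scaled derivatives of order at most \<open>p\<close>. Since \<open>L\<close> varies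
  by at most a bounded factor on the polydisc \<open>D\<^sup>2[z\<^sub>0, \<beta>/L(z\<^sub>0)]\<close>, this maximum grows by at most a
  fixed factor across that polydisc (a mean value argument along each coordinate). The Cauchy
  inequalities on the polydisc then bound a derivative of order \<open>(k\<^sub>1 + s\<^sub>1, k\<^sub>2 + s\<^sub>2)\<close> at
  \<open>z\<^sub>0\<close> by that maximum divided by \<open>\<beta> ^ (s\<^sub>1 + s\<^sub>2)\<close>, and as \<open>\<beta> > 1\<close> this is dominated
  by the derivatives of order at most \<open>p + m\<close> for a fixed \<open>m\<close>.

  Analyticity is used only through continuity and holomorphy in each variable separately:
  Cauchy's formula in one variable, differentiated under the integral sign in the other, shows
  that all mixed partial derivatives are again holomorphic in each variable and that partial
  differentiations in the two variables commute.\<close>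

section \<open>Cauchy integrals over circles depending on a parameter\<close>

lemma norm_circlepath_0 [simp]: "0 \<le> r \<Longrightarrow> cmod (circlepath 0 r t) = r"
  by (simp add: circlepath norm_mult)

lemma continuous_on_circlepath [continuous_intros]: "continuous_on S (circlepath z r)"
  unfolding circlepath by (intro continuous_intros)

lemma continuous_on_vector_derivative_circlepath [continuous_intros]:
  "continuous_on S (\<lambda>t. vector_derivative (circlepath z r) (at t))"
  unfolding vector_derivative_circlepath by (intro continuous_intros)

lemma contour_integral_circlepath_0:
  "contour_integral (circlepath 0 r) f =
     integral (cbox 0 1) (\<lambda>t. f (circlepath 0 r t) * vector_derivative (circlepath 0 r) (at t))"
  by (simp add: contour_integral_integral cbox_interval)

lemma continuous_on_circlepath_0_param:
  assumes "0 \<le> r" and "continuous_on (U \<times> sphere 0 r) (\<lambda>(x, \<zeta>). G x \<zeta>)"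
  shows "continuous_on (U \<times> cbox 0 1) (\<lambda>(x, t). G x (circlepath 0 r t))"
proof -
  have "continuous_on (U \<times> cbox 0 1) ((\<lambda>(x, \<zeta>). G x \<zeta>) \<circ> (\<lambda>(x, t). (x, circlepath 0 r t)))"
    by (rule continuous_on_compose[OF _ continuous_on_subset[OF assms(2)]])
       (use assms(1) in \<open>auto simp: split_beta intro!: continuous_intros continuous_on_compose2[OF continuous_on_circlepath]\<close>)
  then show ?thesis by (simp add: o_def split_beta)
qed

lemma continuous_on_contour_integral_circlepath_param:
  fixes G :: "'a::topological_space \<Rightarrow> complex \<Rightarrow> complex"
  assumes "0 \<le> r" and "continuous_on (U \<times> sphere 0 r) (\<lambda>(x, \<zeta>). G x \<zeta>)"
  shows "continuous_on U (\<lambda>x. contour_integral (circlepath 0 r) (G x))"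
  unfolding contour_integral_circlepath_0
  by (rule integral_continuous_on_param)
     (use continuous_on_circlepath_0_param[OF assms] in
       \<open>auto simp: split_beta intro!: continuous_intros continuous_on_compose2[OF continuous_on_vector_derivative_circlepath]\<close>)

lemma has_field_derivative_contour_integral_circlepath_param:
  fixes G G' :: "complex \<Rightarrow> complex \<Rightarrow> complex"
  assumes U: "convex U" "x \<in> U" and r: "0 \<le> r"
    and der: "\<And>x \<zeta>. x \<in> U \<Longrightarrow> \<zeta> \<in> sphere 0 r \<Longrightarrow> ((\<lambda>x. G x \<zeta>) has_field_derivative G' x \<zeta>) (at x within U)"
    and cont: "\<And>x. x \<in> U \<Longrightarrow> continuous_on (sphere 0 r) (G x)"
    and cont': "continuous_on (U \<times> sphere 0 r) (\<lambda>(x, \<zeta>). G' x \<zeta>)"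
  shows "((\<lambda>x. contour_integral (circlepath 0 r) (G x)) has_field_derivative
           contour_integral (circlepath 0 r) (G' x)) (at x within U)"
  unfolding contour_integral_circlepath_0
proof (rule leibniz_rule_field_derivative[OF _ _ _ U(2,1)])
  fix y t assume "y \<in> U" "t \<in> cbox (0::real) 1"
  with r show "((\<lambda>y. G y (circlepath 0 r t) * vector_derivative (circlepath 0 r) (at t)) has_field_derivative
      G' y (circlepath 0 r t) * vector_derivative (circlepath 0 r) (at t)) (at y within U)"
    by (intro DERIV_cmult_right der) auto
next
  fix y assume "y \<in> U"
  have "continuous_on (cbox 0 1) (G y \<circ> circlepath 0 r)"
    by (rule continuous_on_compose[OF _ continuous_on_subset[OF cont[OF \<open>y \<in> U\<close>]]])
       (use r in \<open>auto intro: continuous_intros\<close>)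
  then show "(\<lambda>t. G y (circlepath 0 r t) * vector_derivative (circlepath 0 r) (at t)) integrable_on cbox 0 1"
    by (intro integrable_continuous) (auto simp: o_def intro!: continuous_intros)
next
  show "continuous_on (U \<times> cbox 0 1)
      (\<lambda>(y, t). G' y (circlepath 0 r t) * vector_derivative (circlepath 0 r) (at t))"
    using continuous_on_circlepath_0_param[OF r cont']
    by (auto simp: split_beta intro!: continuous_intros continuous_on_compose2[OF continuous_on_vector_derivative_circlepath])
qed

lemma higher_deriv_eq_iterate:
  fixes f :: "nat \<Rightarrow> 'a::real_normed_field \<Rightarrow> 'a"
  assumes S: "open S" and f: "\<And>n x. x \<in> S \<Longrightarrow> (f n has_field_derivative f (Suc n) x) (at x)"
    and x: "x \<in> S"
  shows "(deriv ^^ n) (f 0) x = f n x"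
  using x
proof (induction n arbitrary: x)
  case (Suc n)
  have "((deriv ^^ n) (f 0) has_field_derivative f (Suc n) x) (at x)"
    by (rule has_field_derivative_transform_within_open[OF f[OF Suc.prems] S Suc.prems])
       (simp add: Suc.IH)
  then show ?case
    by (simp add: DERIV_imp_deriv)
qed simp

lemma Cauchy_inequality_cball:
  assumes "f holomorphic_on S" "cball \<xi> r \<subseteq> S" "0 < r"
    and "\<And>x. x \<in> sphere \<xi> r \<Longrightarrow> norm (f x) \<le> B"
  shows "norm ((deriv ^^ n) f \<xi>) \<le> fact n * B / r ^ n"
proof (rule Cauchy_inequality)
  show "f holomorphic_on ball \<xi> r"
    using assms(1,2) ball_subset_cball by (blast intro: holomorphic_on_subset)
  show "continuous_on (cball \<xi> r) f"
    using assms(1,2) holomorphic_on_imp_continuous_on continuous_on_subset by blast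
qed (use assms(3,4) in \<open>auto simp: dist_norm\<close>)
section \<open>Separately holomorphic functions on the bidisc\<close>

lemma pd1_funpow: "(pd1 ^^ k) H z = (deriv ^^ k) (\<lambda>u. H (u, snd z)) (fst z)"
proof (induction k arbitrary: z)
  case (Suc k)
  have "(pd1 ^^ Suc k) H z = deriv (\<lambda>w. (pd1 ^^ k) H (w, snd z)) (fst z)"
    by (simp add: pd1_def)
  also have "(\<lambda>w. (pd1 ^^ k) H (w, snd z)) = (deriv ^^ k) (\<lambda>u. H (u, snd z))"
    using Suc by auto
  finally show ?case by simp
qed simp

lemma pd2_funpow: "(pd2 ^^ k) H z = (deriv ^^ k) (\<lambda>v. H (fst z, v)) (snd z)"
proof (induction k arbitrary: z)
  case (Suc k)
  have "(pd2 ^^ Suc k) H z = deriv (\<lambda>w. (pd2 ^^ k) H (fst z, w)) (snd z)"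
    by (simp add: pd2_def)
  also have "(\<lambda>w. (pd2 ^^ k) H (fst z, w)) = (deriv ^^ k) (\<lambda>v. H (fst z, v))"
    using Suc by auto
  finally show ?case by simp
qed simp

locale separately_holomorphic =
  fixes F :: "complex \<times> complex \<Rightarrow> complex"
  assumes continuous: "continuous_on (ball 0 1 \<times> ball 0 1) F"
    and holomorphic_fst: "\<And>v. v \<in> ball 0 1 \<Longrightarrow> (\<lambda>u. F (u, v)) holomorphic_on ball 0 1"
    and holomorphic_snd: "\<And>u. u \<in> ball 0 1 \<Longrightarrow> (\<lambda>v. F (u, v)) holomorphic_on ball 0 1"
begin

lemma swap: "separately_holomorphic (\<lambda>z. F (snd z, fst z))"
proof
  show "continuous_on (ball 0 1 \<times> ball 0 1) (\<lambda>z. F (snd z, fst z))"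
    by (rule continuous_on_compose2[OF continuous]) (auto intro!: continuous_intros)
qed (use holomorphic_fst holomorphic_snd in auto)

lemma pd2_funpow_eq_contour_integral:
  assumes u: "u \<in> ball 0 1" and r: "cmod w < r" "r < 1"
  shows "(pd2 ^^ m) F (u, w) = fact m / (complex_of_real (2 * pi) * \<i>) *
           contour_integral (circlepath 0 r) (\<lambda>\<zeta>. F (u, \<zeta>) / (\<zeta> - w) ^ Suc m)"
proof -
  have hol: "(\<lambda>v. F (u, v)) holomorphic_on ball 0 1"
    using holomorphic_snd u .
  have "cball 0 r \<subseteq> ball (0::complex) 1"
    using r by auto
  then show ?thesis
    unfolding pd2_funpow fst_conv snd_conv
    using r by (intro Cauchy_higher_derivative_integral_circlepath(2)
                 holomorphic_on_subset[OF hol] continuous_on_subset[OF holomorphic_on_imp_continuous_on[OF hol]])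
       auto
qed

lemma continuous_on_pd2_funpow: "continuous_on (ball 0 1 \<times> ball 0 1) ((pd2 ^^ m) F)"
proof -
  have "continuous_on (ball 0 1 \<times> ball 0 r) ((pd2 ^^ m) F)" if r: "0 < r" "r < 1" for r
  proof (rule continuous_on_eq)
    have "continuous_on ((ball 0 1 \<times> ball 0 r) \<times> sphere 0 r)
        (\<lambda>(z, \<zeta>). F (fst z, \<zeta>) / (\<zeta> - snd z) ^ Suc m)"
      using r by (auto simp: split_beta intro!: continuous_intros continuous_on_compose2[OF continuous])
    then show "continuous_on (ball 0 1 \<times> ball 0 r) (\<lambda>z. fact m / (complex_of_real (2 * pi) * \<i>) *
        contour_integral (circlepath 0 r) (\<lambda>\<zeta>. F (fst z, \<zeta>) / (\<zeta> - snd z) ^ Suc m))"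
      using r by (intro continuous_intros continuous_on_contour_integral_circlepath_param) auto
  qed (use r in \<open>auto simp: pd2_funpow_eq_contour_integral\<close>)
  moreover have cover: "ball 0 1 \<times> ball 0 1 = (\<Union>r\<in>{0<..<1}. ball (0::complex) 1 \<times> ball (0::complex) r)"
  proof (intro equalityI subsetI)
    fix z :: "complex \<times> complex" assume z: "z \<in> ball 0 1 \<times> ball 0 1"
    then have "(1 + cmod (snd z)) / 2 \<in> {0<..<1}" "z \<in> ball 0 1 \<times> ball 0 ((1 + cmod (snd z)) / 2)"
      by (auto simp: mem_Times_iff intro: add_pos_nonneg)
    then show "z \<in> (\<Union>r\<in>{0<..<1}. ball 0 1 \<times> ball 0 r)"
      by blast
  qed auto
  ultimately show ?thesis
    unfolding cover by (intro continuous_on_open_UN) (auto intro: open_Times)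
qed

lemma continuous_on_pd1: "continuous_on (ball 0 1 \<times> ball 0 1) (pd1 F)"
proof -
  interpret swapped: separately_holomorphic "\<lambda>z. F (snd z, fst z)"
    by (rule swap)
  have "continuous_on (ball 0 1 \<times> ball 0 1) (\<lambda>z. pd2 (\<lambda>z. F (snd z, fst z)) (snd z, fst z))"
    by (rule continuous_on_compose2[OF swapped.continuous_on_pd2_funpow[of 1, simplified]])
       (auto intro!: continuous_intros)
  then show ?thesis
    by (simp add: pd1_def pd2_def)
qed

lemma holomorphic_on_pd2_funpow:
  assumes w: "w \<in> ball 0 1"
  shows "(\<lambda>u. (pd2 ^^ m) F (u, w)) holomorphic_on ball 0 1"
proof (rule holomorphic_transform)
  define r where "r = (1 + cmod w) / 2"
  have r: "cmod w < r" "r < 1" "0 \<le> r"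
    using w by (auto simp: r_def)
  have sphere: "sphere 0 r \<subseteq> ball (0::complex) 1"
    using r by auto
  let ?I = "\<lambda>u. contour_integral (circlepath 0 r) (\<lambda>\<zeta>. F (u, \<zeta>) / (\<zeta> - w) ^ Suc m)"
  have deriv: "(?I has_field_derivative
      contour_integral (circlepath 0 r) (\<lambda>\<zeta>. pd1 F (u, \<zeta>) / (\<zeta> - w) ^ Suc m)) (at u)"
    if u: "u \<in> ball 0 1" for u
  proof -
    have "(?I has_field_derivative
        contour_integral (circlepath 0 r) (\<lambda>\<zeta>. pd1 F (u, \<zeta>) / (\<zeta> - w) ^ Suc m)) (at u within ball 0 1)"
    proof (rule has_field_derivative_contour_integral_circlepath_param[OF convex_ball u r(3),
          where G = "\<lambda>u \<zeta>. F (u, \<zeta>) / (\<zeta> - w) ^ Suc m" and G' = "\<lambda>u \<zeta>. pd1 F (u, \<zeta>) / (\<zeta> - w) ^ Suc m"])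
      fix x \<zeta> assume x: "x \<in> ball (0::complex) 1" and "\<zeta> \<in> sphere (0::complex) r"
      with sphere have "(\<lambda>x. F (x, \<zeta>)) holomorphic_on ball 0 1"
        by (intro holomorphic_fst) auto
      from holomorphic_derivI[OF this open_ball x]
      have "((\<lambda>x. F (x, \<zeta>)) has_field_derivative pd1 F (x, \<zeta>)) (at x within ball 0 1)"
        by (simp add: pd1_def)
      then show "((\<lambda>x. F (x, \<zeta>) / (\<zeta> - w) ^ Suc m) has_field_derivative
          pd1 F (x, \<zeta>) / (\<zeta> - w) ^ Suc m) (at x within ball 0 1)"
        by (rule DERIV_cdivide)
    next
      fix x assume "x \<in> ball (0::complex) 1"
      then show "continuous_on (sphere 0 r) (\<lambda>\<zeta>. F (x, \<zeta>) / (\<zeta> - w) ^ Suc m)"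
        using r sphere by (auto intro!: continuous_intros continuous_on_compose2[OF continuous])
    next
      show "continuous_on (ball 0 1 \<times> sphere 0 r) (\<lambda>(x, \<zeta>). pd1 F (x, \<zeta>) / (\<zeta> - w) ^ Suc m)"
        using r sphere
        by (auto simp: split_beta intro!: continuous_intros continuous_on_compose2[OF continuous_on_pd1])
    qed
    then show ?thesis
      unfolding at_within_open[OF u open_ball] .
  qed
  show "(\<lambda>u. fact m / (complex_of_real (2 * pi) * \<i>) * ?I u) holomorphic_on ball 0 1"
    unfolding holomorphic_on_open[OF open_ball] using DERIV_cmult[OF deriv] by blast
  show "fact m / (complex_of_real (2 * pi) * \<i>) * ?I u = (pd2 ^^ m) F (u, w)" if "u \<in> ball 0 1" for u
    using pd2_funpow_eq_contour_integral[OF _ r(1,2)] that by simp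
qed

lemma pderiv2_eq_higher_deriv: "pderiv2 F k m (u, w) = (deriv ^^ k) (\<lambda>u. (pd2 ^^ m) F (u, w)) u"
  by (simp add: pderiv2_def pd1_funpow)

lemma has_field_derivative_pderiv2_fst:
  assumes "u \<in> ball 0 1" "w \<in> ball 0 1"
  shows "((\<lambda>u. pderiv2 F k m (u, w)) has_field_derivative pderiv2 F (Suc k) m (u, w)) (at u)"
  using has_field_derivative_higher_deriv[OF holomorphic_on_pd2_funpow open_ball, of w u k m] assms
  by (simp add: pderiv2_eq_higher_deriv del: funpow.simps)

lemma pderiv2_eq_contour_integral:
  assumes r: "cmod u < r" "r < 1" and w: "w \<in> ball 0 1"
  shows "pderiv2 F k m (u, w) = fact k / (complex_of_real (2 * pi) * \<i>) *
           contour_integral (circlepath 0 r) (\<lambda>\<zeta>. (pd2 ^^ m) F (\<zeta>, w) / (\<zeta> - u) ^ Suc k)"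
proof -
  have hol: "(\<lambda>u. (pd2 ^^ m) F (u, w)) holomorphic_on ball 0 1"
    using holomorphic_on_pd2_funpow w .
  have "cball 0 r \<subseteq> ball (0::complex) 1"
    using r by auto
  then show ?thesis
    unfolding pderiv2_eq_higher_deriv
    using r by (intro Cauchy_higher_derivative_integral_circlepath(2)
                 holomorphic_on_subset[OF hol] continuous_on_subset[OF holomorphic_on_imp_continuous_on[OF hol]])
       auto
qed

lemma has_field_derivative_pd2_funpow:
  assumes "u \<in> ball 0 1" "w \<in> ball 0 1"
  shows "((\<lambda>w. (pd2 ^^ m) F (u, w)) has_field_derivative (pd2 ^^ Suc m) F (u, w)) (at w)"
  using has_field_derivative_higher_deriv[OF holomorphic_snd open_ball, of u w m] assms
  by (simp add: pd2_funpow del: funpow.simps)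

text \<open>The Cauchy formula in the first variable is differentiated under the integral sign in the
  second; this is where the order of the partial derivatives gets interchanged.\<close>

lemma has_field_derivative_pderiv2_snd:
  assumes u: "u \<in> ball 0 1" and w: "w \<in> ball 0 1"
  shows "((\<lambda>w. pderiv2 F k m (u, w)) has_field_derivative pderiv2 F k (Suc m) (u, w)) (at w)"
proof -
  define r where "r = (1 + cmod u) / 2"
  have r: "cmod u < r" "r < 1" "0 \<le> r"
    using u by (auto simp: r_def)
  have sphere: "sphere 0 r \<subseteq> ball (0::complex) 1"
    using r by auto
  let ?I = "\<lambda>m w. contour_integral (circlepath 0 r) (\<lambda>\<zeta>. (pd2 ^^ m) F (\<zeta>, w) / (\<zeta> - u) ^ Suc k)"
  have "(?I m has_field_derivative ?I (Suc m) w) (at w within ball 0 1)"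
  proof (rule has_field_derivative_contour_integral_circlepath_param[OF convex_ball w r(3),
        where G = "\<lambda>w \<zeta>. (pd2 ^^ m) F (\<zeta>, w) / (\<zeta> - u) ^ Suc k"
          and G' = "\<lambda>w \<zeta>. (pd2 ^^ Suc m) F (\<zeta>, w) / (\<zeta> - u) ^ Suc k"])
    fix x \<zeta> assume x: "x \<in> ball (0::complex) 1" and "\<zeta> \<in> sphere (0::complex) r"
    with sphere have "\<zeta> \<in> ball 0 1"
      by auto
    from has_field_derivative_pd2_funpow[OF this x]
    show "((\<lambda>x. (pd2 ^^ m) F (\<zeta>, x) / (\<zeta> - u) ^ Suc k) has_field_derivative
        (pd2 ^^ Suc m) F (\<zeta>, x) / (\<zeta> - u) ^ Suc k) (at x within ball 0 1)"
      by (rule DERIV_cdivide[OF has_field_derivative_at_within])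
  next
    fix x assume "x \<in> ball (0::complex) 1"
    then show "continuous_on (sphere 0 r) (\<lambda>\<zeta>. (pd2 ^^ m) F (\<zeta>, x) / (\<zeta> - u) ^ Suc k)"
      using r sphere by (auto intro!: continuous_intros continuous_on_compose2[OF continuous_on_pd2_funpow])
  next
    have "continuous_on (ball 0 1 \<times> sphere 0 r) (\<lambda>z. (pd2 ^^ Suc m) F (snd z, fst z))"
      by (rule continuous_on_compose2[OF continuous_on_pd2_funpow]) (use sphere in \<open>auto intro!: continuous_intros\<close>)
    then show "continuous_on (ball 0 1 \<times> sphere 0 r) (\<lambda>(x, \<zeta>). (pd2 ^^ Suc m) F (\<zeta>, x) / (\<zeta> - u) ^ Suc k)"
      using r by (auto simp: split_beta simp del: funpow.simps intro!: continuous_intros)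
  qed
  then have deriv: "((\<lambda>w. fact k / (complex_of_real (2 * pi) * \<i>) * ?I m w) has_field_derivative
      fact k / (complex_of_real (2 * pi) * \<i>) * ?I (Suc m) w) (at w)"
    unfolding at_within_open[OF w open_ball] by (rule DERIV_cmult)
  have eq: "fact k / (complex_of_real (2 * pi) * \<i>) * ?I n x = pderiv2 F k n (u, x)"
    if "x \<in> ball 0 1" for n x
    using pderiv2_eq_contour_integral[OF r(1,2)] that by simp
  from has_field_derivative_transform_within_open[OF deriv open_ball w eq]
  show ?thesis
    unfolding eq[OF w] .
qed

lemma holomorphic_on_pderiv2_fst:
  assumes "w \<in> ball 0 1"
  shows "(\<lambda>u. pderiv2 F k m (u, w)) holomorphic_on ball 0 1"
  unfolding holomorphic_on_open[OF open_ball] using has_field_derivative_pderiv2_fst[OF _ assms] by blast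

lemma holomorphic_on_pderiv2_snd:
  assumes "u \<in> ball 0 1"
  shows "(\<lambda>w. pderiv2 F k m (u, w)) holomorphic_on ball 0 1"
  unfolding holomorphic_on_open[OF open_ball] using has_field_derivative_pderiv2_snd[OF assms] by blast

lemma higher_deriv_pderiv2_fst:
  assumes u: "u \<in> ball 0 1" and w: "w \<in> ball 0 1"
  shows "(deriv ^^ s) (\<lambda>u. pderiv2 F k m (u, w)) u = pderiv2 F (k + s) m (u, w)"
proof -
  have "(deriv ^^ s) (\<lambda>u. pderiv2 F (k + 0) m (u, w)) u = pderiv2 F (k + s) m (u, w)"
    by (rule higher_deriv_eq_iterate[OF open_ball _ u, where f = "\<lambda>n u. pderiv2 F (k + n) m (u, w)"])
       (use has_field_derivative_pderiv2_fst[OF _ w] in simp)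
  then show ?thesis
    by simp
qed

lemma higher_deriv_pderiv2_snd:
  assumes u: "u \<in> ball 0 1" and w: "w \<in> ball 0 1"
  shows "(deriv ^^ s) (\<lambda>w. pderiv2 F k m (u, w)) w = pderiv2 F k (m + s) (u, w)"
proof -
  have "(deriv ^^ s) (\<lambda>w. pderiv2 F k (m + 0) (u, w)) w = pderiv2 F k (m + s) (u, w)"
    by (rule higher_deriv_eq_iterate[OF open_ball _ w, where f = "\<lambda>n w. pderiv2 F k (m + n) (u, w)"])
       (use has_field_derivative_pderiv2_snd[OF u] in simp)
  then show ?thesis
    by simp
qed

lemma norm_pderiv2_add_le:
  assumes a: "cball a r1 \<subseteq> ball 0 1" and b: "cball b r2 \<subseteq> ball 0 1" and r: "0 < r1" "0 < r2"
    and B: "\<And>u v. u \<in> cball a r1 \<Longrightarrow> v \<in> cball b r2 \<Longrightarrow> cmod (pderiv2 F k1 k2 (u, v)) \<le> B"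
  shows "cmod (pderiv2 F (k1 + s1) (k2 + s2) (a, b)) \<le> fact s1 * fact s2 * B / (r1 ^ s1 * r2 ^ s2)"
proof -
  have ab: "a \<in> ball 0 1" "b \<in> ball 0 1"
    using a b r by (metis centre_in_cball less_imp_le subsetD)+
  have snd: "cmod (pderiv2 F k1 (k2 + s2) (u, b)) \<le> fact s2 * B / r2 ^ s2" if u: "u \<in> cball a r1" for u
  proof -
    have "u \<in> ball 0 1"
      using u a by auto
    have "cmod ((deriv ^^ s2) (\<lambda>v. pderiv2 F k1 k2 (u, v)) b) \<le> fact s2 * B / r2 ^ s2"
      by (rule Cauchy_inequality_cball[OF holomorphic_on_pderiv2_snd[OF \<open>u \<in> ball 0 1\<close>] b r(2)])
         (use B[OF u] in auto)
    then show ?thesis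
      by (simp add: higher_deriv_pderiv2_snd[OF \<open>u \<in> ball 0 1\<close> ab(2)])
  qed
  have "cmod ((deriv ^^ s1) (\<lambda>u. pderiv2 F k1 (k2 + s2) (u, b)) a)
      \<le> fact s1 * (fact s2 * B / r2 ^ s2) / r1 ^ s1"
    by (rule Cauchy_inequality_cball[OF holomorphic_on_pderiv2_fst[OF ab(2)] a r(1)]) (use snd in auto)
  then show ?thesis
    by (simp add: higher_deriv_pderiv2_fst[OF ab] ac_simps)
qed

end
lemma has_field_derivative_partial:
  fixes F :: "complex \<times> complex \<Rightarrow> complex"
  assumes F: "(F has_derivative (\<lambda>h. a * fst h + b * snd h)) (at (u, v))"
  shows "((\<lambda>u. F (u, v)) has_field_derivative a) (at u)"
    and "((\<lambda>v. F (u, v)) has_field_derivative b) (at v)"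
proof -
  have "((\<lambda>u. (u, v)) has_derivative (\<lambda>h. (h, 0))) (at u)"
    by (auto intro!: derivative_eq_intros)
  from has_derivative_compose[OF this F]
  show "((\<lambda>u. F (u, v)) has_field_derivative a) (at u)"
    unfolding has_field_derivative_def by (rule has_derivative_eq_rhs) (auto simp: fun_eq_iff)
  have "((\<lambda>v. (u, v)) has_derivative (\<lambda>h. (0, h))) (at v)"
    by (auto intro!: derivative_eq_intros)
  from has_derivative_compose[OF this F]
  show "((\<lambda>v. F (u, v)) has_field_derivative b) (at v)"
    unfolding has_field_derivative_def by (rule has_derivative_eq_rhs) (auto simp: fun_eq_iff)
qed

lemma analytic2_on_D2_imp_separately_holomorphic:
  assumes "analytic2_on F D2"
  shows "separately_holomorphic F"
proof
  have der: "\<exists>a b. (F has_derivative (\<lambda>h. a * fst h + b * snd h)) (at (u, v))"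
    if "u \<in> ball 0 1" "v \<in> ball 0 1" for u v
    using assms that by (auto simp: analytic2_on_def D2_def)
  show "continuous_on (ball 0 1 \<times> ball 0 1) F"
    by (rule continuous_at_imp_continuous_on) (use der has_derivative_continuous in fastforce)
  show "(\<lambda>u. F (u, v)) holomorphic_on ball 0 1" if "v \<in> ball 0 1" for v
    using der that has_field_derivative_partial(1) by (fastforce simp: holomorphic_on_open)
  show "(\<lambda>v. F (u, v)) holomorphic_on ball 0 1" if "u \<in> ball 0 1" for u
    using der that has_field_derivative_partial(2) by (fastforce simp: holomorphic_on_open)
qed

section \<open>Growth of a weighted maximum\<close>

definition weighted_max :: "('i \<Rightarrow> complex) \<Rightarrow> ('i \<Rightarrow> real) \<Rightarrow> 'i set \<Rightarrow> real" where
  "weighted_max v w K = Max ((\<lambda>j. cmod (v j) / w j) ` K)"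

lemma weighted_max_ge: "finite K \<Longrightarrow> j \<in> K \<Longrightarrow> cmod (v j) / w j \<le> weighted_max v w K"
  unfolding weighted_max_def by (intro Max_ge) auto

lemma weighted_max_leI:
  "finite K \<Longrightarrow> K \<noteq> {} \<Longrightarrow> (\<And>j. j \<in> K \<Longrightarrow> cmod (v j) / w j \<le> B) \<Longrightarrow> weighted_max v w K \<le> B"
  unfolding weighted_max_def by (intro Max.boundedI) auto

lemma weighted_max_nonneg:
  assumes "finite K" "j \<in> K" "0 \<le> w j"
  shows "0 \<le> weighted_max v w K"
  using weighted_max_ge[OF assms(1,2), of v w] assms(3) by (meson divide_nonneg_nonneg norm_ge_zero order_trans)

lemma continuous_on_weighted_max:
  assumes "finite K" "K \<noteq> {}" "\<And>k. k \<in> K \<Longrightarrow> continuous_on X (h k)"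
  shows "continuous_on X (\<lambda>u. weighted_max (\<lambda>j. h j u) w K)"
  unfolding weighted_max_def using assms
proof (induction K rule: finite_ne_induct)
  case (singleton k)
  then show ?case
    by (simp add: divide_inverse continuous_on_mult_right continuous_on_norm)
next
  case (insert k K)
  have "continuous_on X (\<lambda>u. max (cmod (h k u) / w k) (Max ((\<lambda>j. cmod (h j u) / w j) ` K)))"
    using insert
    by (intro continuous_on_max) (auto simp: divide_inverse intro!: continuous_on_mult_right continuous_on_norm)
  with insert show ?case
    by simp
qed

text \<open>If the derivatives of a finite family are controlled by its own weighted maximum, that
  maximum at most doubles over a set of diameter small against the control constant: at a point
  where it attains its maximum value \<open>M\<close> on \<open>X\<close>, the mean value inequality bounds it by its
  value at \<open>a\<close> plus \<open>\<rho> B M \<le> M / 2\<close>.\<close>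

lemma weighted_max_doubling:
  fixes h h' :: "'i \<Rightarrow> complex \<Rightarrow> complex"
  assumes K: "finite K" "K \<noteq> {}"
    and X: "convex X" "compact X" "a \<in> X" "\<And>u. u \<in> X \<Longrightarrow> cmod (u - a) \<le> \<rho>"
    and der: "\<And>k u. k \<in> K \<Longrightarrow> u \<in> X \<Longrightarrow> (h k has_field_derivative h' k u) (at u)"
    and w: "\<And>k. k \<in> K \<Longrightarrow> 0 < w k"
    and bound: "\<And>k u. k \<in> K \<Longrightarrow> u \<in> X \<Longrightarrow> cmod (h' k u) \<le> B * w k * weighted_max (\<lambda>j. h j u) w K"
    and B: "0 \<le> B" "\<rho> * B \<le> 1/2"
    and u: "u \<in> X"
  shows "weighted_max (\<lambda>j. h j u) w K \<le> 2 * weighted_max (\<lambda>j. h j a) w K"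
proof -
  define S where "S u = weighted_max (\<lambda>j. h j u) w K" for u
  obtain k0 where "k0 \<in> K"
    using K by blast
  then have S_nonneg: "0 \<le> S u" for u
    using weighted_max_nonneg[OF K(1)] w by (force simp: S_def)
  have "continuous_on X (h k)" if "k \<in> K" for k
    using der[OF that] by (meson DERIV_isCont continuous_at_imp_continuous_on)
  then have "continuous_on X S"
    unfolding S_def by (rule continuous_on_weighted_max[OF K])
  then obtain u0 where u0: "u0 \<in> X" "\<And>y. y \<in> X \<Longrightarrow> S y \<le> S u0"
    using continuous_attains_sup[OF X(2)] X(3) by blast
  have "S y \<le> S a + S u0 / 2" if y: "y \<in> X" for y
    unfolding S_def[of y]
  proof (rule weighted_max_leI[OF K])
    fix k assume k: "k \<in> K"
    have "cmod (h k y - h k a) \<le> (B * w k * S u0) * cmod (y - a)"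
    proof (rule field_differentiable_bound[OF X(1) _ _ y X(3)])
      show "(h k has_field_derivative h' k z) (at z within X)" if "z \<in> X" for z
        using der[OF k that] by (rule has_field_derivative_at_within)
      show "cmod (h' k z) \<le> B * w k * S u0" if "z \<in> X" for z
        using bound[OF k that] u0(2)[OF that] B w[OF k] unfolding S_def
        by (meson mult_left_mono mult_nonneg_nonneg less_imp_le order_trans)
    qed
    also have "\<dots> \<le> (B * w k * S u0) * \<rho>"
      using B w[OF k] S_nonneg[of u0] by (intro mult_left_mono X(4)[OF y]) auto
    also have "\<dots> = w k * (\<rho> * B) * S u0"
      by (simp add: algebra_simps)
    also have "\<dots> \<le> w k * (1 / 2) * S u0"
      using B w[OF k] S_nonneg[of u0] by (intro mult_left_mono mult_right_mono) auto
    finally have "cmod (h k y) \<le> cmod (h k a) + w k * (S u0 / 2)"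
      using norm_triangle_sub[of "h k y" "h k a"] by linarith
    then have "cmod (h k y) / w k \<le> cmod (h k a) / w k + S u0 / 2"
      using w[OF k] by (simp add: field_simps)
    also have "\<dots> \<le> S a + S u0 / 2"
      using weighted_max_ge[OF K(1) k] by (simp add: S_def)
    finally show "cmod (h k y) / w k \<le> S a + S u0 / 2" .
  qed
  from this[OF u0(1)] u0(2)[OF u] show ?thesis
    by (simp add: S_def)
qed

lemma weighted_max_growth:
  fixes h h' :: "'i \<Rightarrow> complex \<Rightarrow> complex"
  assumes K: "finite K" "K \<noteq> {}"
    and X: "convex X" "compact X" "a \<in> X" "u \<in> X"
    and der: "\<And>k z. k \<in> K \<Longrightarrow> z \<in> X \<Longrightarrow> (h k has_field_derivative h' k z) (at z)"
    and w: "\<And>k. k \<in> K \<Longrightarrow> 0 < w k"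
    and bound: "\<And>k z. k \<in> K \<Longrightarrow> z \<in> X \<Longrightarrow> cmod (h' k z) \<le> B * w k * weighted_max (\<lambda>j. h j z) w K"
    and B: "0 \<le> B" "0 < \<rho>" "\<rho> * B \<le> 1/2"
    and dist: "cmod (u - a) \<le> real N * \<rho>"
  shows "weighted_max (\<lambda>j. h j u) w K \<le> 2 ^ N * weighted_max (\<lambda>j. h j a) w K"
proof (cases "N = 0")
  case True
  with dist show ?thesis
    by simp
next
  case False
  define S where "S u = weighted_max (\<lambda>j. h j u) w K" for u
  define q where "q i = a + of_real (real i / real N) * (u - a)" for i
  have q_in: "q i \<in> X" if "i \<le> N" for i
  proof -
    have "(1 - real i / real N) *\<^sub>R a + (real i / real N) *\<^sub>R u \<in> X"
      using that False by (intro convexD[OF X(1,3,4)]) auto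
    moreover have "(1 - real i / real N) *\<^sub>R a + (real i / real N) *\<^sub>R u = q i"
      by (simp add: q_def scaleR_conv_of_real algebra_simps diff_divide_distrib)
    ultimately show ?thesis
      by simp
  qed
  have q_step: "cmod (q (Suc i) - q i) \<le> \<rho>" for i
  proof -
    have "q (Suc i) - q i = of_real (1 / real N) * (u - a)"
      using False by (simp add: q_def field_simps)
    then have "cmod (q (Suc i) - q i) = cmod (u - a) / real N"
      by (simp add: norm_mult norm_divide)
    also have "\<dots> \<le> \<rho>"
      using dist False by (simp add: field_simps)
    finally show ?thesis .
  qed
  have "S (q i) \<le> 2 ^ i * S a" if "i \<le> N" for i
    using that
  proof (induction i)
    case (Suc i)
    have "S (q (Suc i)) \<le> 2 * S (q i)"
      unfolding S_def
    proof (rule weighted_max_doubling[OF K, of "X \<inter> cball (q i) \<rho>"])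
      show "q (Suc i) \<in> X \<inter> cball (q i) \<rho>"
        using q_in[OF Suc.prems] q_step[of i] by (auto simp: dist_norm norm_minus_commute)
    qed (use Suc.prems q_in B der w bound X in
          \<open>auto simp: dist_norm norm_minus_commute convex_Int compact_Int_closed\<close>)
    with Suc show ?case
      by simp
  qed (simp add: q_def)
  from this[of N] False show ?thesis
    by (simp add: S_def q_def)
qed

section \<open>Sufficiency of the criterion\<close>

lemma finite_pairs_sum_le: "finite {(k1, k2). k1 + k2 \<le> (n::nat)}"
  by (rule finite_subset[of _ "{..n} \<times> {..n}"]) auto

lemma finite_pairs_sum_eq: "finite {(k1, k2). k1 + k2 = (n::nat)}"
  by (rule finite_subset[of _ "{..n} \<times> {..n}"]) auto

lemma fact_mult_le_fact_add: "fact a * fact b \<le> (fact (a + b) :: real)"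
proof -
  have "fact a * fact b * 1 \<le> fact a * fact b * ((a + b) choose a)"
    by (intro mult_le_mono2) (simp add: Suc_leI zero_less_binomial)
  also have "\<dots> = fact (a + b)"
    using binomial_fact_lemma[of a "a + b"] by simp
  finally show ?thesis
    by (metis mult_1_right of_nat_fact of_nat_le_iff of_nat_mult)
qed

lemma D2_imp_in_ball: "z \<in> D2 \<Longrightarrow> fst z \<in> ball 0 1 \<and> snd z \<in> ball 0 1"
  by (simp add: D2_def)

definition index_ratio :: "(complex \<times> complex \<Rightarrow> real) \<Rightarrow> (complex \<times> complex \<Rightarrow> real)
    \<Rightarrow> (complex \<times> complex \<Rightarrow> complex) \<Rightarrow> complex \<times> complex \<Rightarrow> nat \<times> nat \<Rightarrow> real" where
  "index_ratio l1 l2 F z k =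
     cmod (pderiv2 F (fst k) (snd k) z) / (fact (fst k) * fact (snd k) * l1 z ^ fst k * l2 z ^ snd k)"

lemma index_ratio_nonneg: "0 \<le> l1 z \<Longrightarrow> 0 \<le> l2 z \<Longrightarrow> 0 \<le> index_ratio l1 l2 F z k"
  by (simp add: index_ratio_def)

lemma bounded_L_index_iff:
  "bounded_L_index l1 l2 F \<longleftrightarrow>
     (\<exists>n0. \<forall>z\<in>D2. \<forall>k. index_ratio l1 l2 F z k \<le> Max (index_ratio l1 l2 F z ` {(k1, k2). k1 + k2 \<le> n0}))"
  by (simp add: bounded_L_index_def index_ratio_def split_beta)

definition derivative_criterion :: "(complex \<times> complex \<Rightarrow> real) \<Rightarrow> (complex \<times> complex \<Rightarrow> real)
    \<Rightarrow> (complex \<times> complex \<Rightarrow> complex) \<Rightarrow> nat \<Rightarrow> real \<Rightarrow> bool" where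
  "derivative_criterion l1 l2 F p c \<longleftrightarrow> (\<forall>z\<in>D2.
     Max ((\<lambda>(j1, j2). cmod (pderiv2 F j1 j2 z) / (l1 z ^ j1 * l2 z ^ j2)) ` {(j1, j2). j1 + j2 = p + 1})
     \<le> c * Max ((\<lambda>(k1, k2). cmod (pderiv2 F k1 k2 z) / (l1 z ^ k1 * l2 z ^ k2)) ` {(k1, k2). k1 + k2 \<le> p}))"

text \<open>\<open>\<Lambda>1\<close> and \<open>\<Lambda>2\<close> stand for the bounds \<open>\<lambda>\<^sub>1\<^sub>,\<^sub>j(\<beta>, \<beta>)\<close> and \<open>\<lambda>\<^sub>2\<^sub>,\<^sub>j(\<beta>, \<beta>)\<close> of the class
  \<open>Q\<^sup>2\<close>, taken uniformly in \<open>j\<close> and widened so that \<open>\<Lambda>1 \<le> 1 \<le> \<Lambda>2\<close>.\<close>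

locale L_index_criterion = separately_holomorphic F for F +
  fixes l1 l2 :: "complex \<times> complex \<Rightarrow> real" and \<beta> \<Lambda>1 \<Lambda>2 c :: real and p :: nat
  assumes \<beta>: "1 < \<beta>"
    and l_pos: "\<And>z. z \<in> D2 \<Longrightarrow> 0 < l1 z \<and> 0 < l2 z"
    and Ldisc_subset: "\<And>z0. z0 \<in> D2 \<Longrightarrow> polydisc z0 (\<beta> / l1 z0, \<beta> / l2 z0) \<subseteq> D2"
    and \<Lambda>: "0 < \<Lambda>1" "\<Lambda>1 \<le> 1" "1 \<le> \<Lambda>2"
    and l_ratio: "\<And>z0 z. z0 \<in> D2 \<Longrightarrow> z \<in> polydisc z0 (\<beta> / l1 z0, \<beta> / l2 z0) \<Longrightarrow>
        \<Lambda>1 * l1 z0 \<le> l1 z \<and> l1 z \<le> \<Lambda>2 * l1 z0 \<and> \<Lambda>1 * l2 z0 \<le> l2 z \<and> l2 z \<le> \<Lambda>2 * l2 z0"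
    and c: "0 \<le> c"
    and criterion: "derivative_criterion l1 l2 F p c"
begin

abbreviation Ldisc :: "complex \<times> complex \<Rightarrow> (complex \<times> complex) set" where
  "Ldisc z0 \<equiv> polydisc z0 (\<beta> / l1 z0, \<beta> / l2 z0)"

definition Kp :: "(nat \<times> nat) set" where
  "Kp = {(k1, k2). k1 + k2 \<le> p}"

definition lpow :: "nat \<times> nat \<Rightarrow> complex \<times> complex \<Rightarrow> real" where
  "lpow k z = l1 z ^ fst k * l2 z ^ snd k"

text \<open>\<open>M z0 z\<close> is the maximum of the scaled derivatives of order at most \<open>p\<close> at \<open>z\<close>, with the
  scaling frozen at \<open>z0\<close>; \<open>M z z\<close> is the right-hand side of the criterion.\<close>

definition M :: "complex \<times> complex \<Rightarrow> complex \<times> complex \<Rightarrow> real" where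
  "M z0 z = weighted_max (\<lambda>k. pderiv2 F (fst k) (snd k) z) (\<lambda>k. lpow k z0) Kp"

definition A :: real where
  "A = max c 1 * \<Lambda>2 ^ (p + 1) / \<Lambda>1 ^ p"

definition N :: nat where
  "N = nat \<lceil>2 * A * \<beta>\<rceil>"

lemma finite_Kp: "finite Kp" and zero_in_Kp: "(0, 0) \<in> Kp"
  using finite_pairs_sum_le[of p] by (auto simp: Kp_def)

lemma lpow_pos: "z \<in> D2 \<Longrightarrow> 0 < lpow k z"
  using l_pos[of z] by (simp add: lpow_def)

lemma Ldisc_D2: "z0 \<in> D2 \<Longrightarrow> z \<in> Ldisc z0 \<Longrightarrow> z \<in> D2"
  using Ldisc_subset by blast

lemma M_nonneg: "z0 \<in> D2 \<Longrightarrow> 0 \<le> M z0 z"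
  unfolding M_def using lpow_pos by (intro weighted_max_nonneg[OF finite_Kp zero_in_Kp]) (simp add: less_imp_le)

lemma norm_pderiv2_le_M: "z0 \<in> D2 \<Longrightarrow> k \<in> Kp \<Longrightarrow> cmod (pderiv2 F (fst k) (snd k) z) \<le> lpow k z0 * M z0 z"
  using weighted_max_ge[OF finite_Kp, of k "\<lambda>k. pderiv2 F (fst k) (snd k) z" "\<lambda>k. lpow k z0"] lpow_pos[of z0 k]
  by (simp add: M_def field_simps)

lemma A_ge_1: "1 \<le> A"
proof -
  have "\<Lambda>1 ^ p \<le> 1"
    using \<Lambda> by (simp add: power_le_one)
  moreover have "1 \<le> \<Lambda>2 ^ (p + 1)"
    using \<Lambda>(3) by (rule one_le_power)
  moreover have "1 \<le> max c 1"
    by simp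
  ultimately have "\<Lambda>1 ^ p \<le> max c 1 * \<Lambda>2 ^ (p + 1)"
    by (metis mult_mono' mult_1 order.trans zero_le_one)
  then show ?thesis
    using \<Lambda>(1) by (simp add: A_def)
qed

lemma lpow_upper:
  assumes z0: "z0 \<in> D2" and z: "z \<in> Ldisc z0" and k: "fst k + snd k \<le> p + 1"
  shows "lpow k z \<le> \<Lambda>2 ^ (p + 1) * lpow k z0"
proof -
  note l = l_ratio[OF z0 z] l_pos[OF Ldisc_D2[OF z0 z]] l_pos[OF z0]
  have "lpow k z \<le> (\<Lambda>2 * l1 z0) ^ fst k * (\<Lambda>2 * l2 z0) ^ snd k"
    unfolding lpow_def using l by (intro mult_mono power_mono) auto
  also have "\<dots> = \<Lambda>2 ^ (fst k + snd k) * lpow k z0"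
    by (simp add: lpow_def power_add power_mult_distrib)
  also have "\<dots> \<le> \<Lambda>2 ^ (p + 1) * lpow k z0"
    using lpow_pos[OF z0, of k] \<Lambda> k by (intro mult_right_mono power_increasing) auto
  finally show ?thesis .
qed

lemma lpow_lower:
  assumes z0: "z0 \<in> D2" and z: "z \<in> Ldisc z0" and k: "k \<in> Kp"
  shows "\<Lambda>1 ^ p * lpow k z0 \<le> lpow k z"
proof -
  note l = l_ratio[OF z0 z] l_pos[OF Ldisc_D2[OF z0 z]] l_pos[OF z0]
  have "\<Lambda>1 ^ p * lpow k z0 \<le> \<Lambda>1 ^ (fst k + snd k) * lpow k z0"
    using lpow_pos[OF z0, of k] \<Lambda> k by (intro mult_right_mono power_decreasing) (auto simp: Kp_def)
  also have "\<dots> = (\<Lambda>1 * l1 z0) ^ fst k * (\<Lambda>1 * l2 z0) ^ snd k"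
    by (simp add: lpow_def power_add power_mult_distrib)
  also have "\<dots> \<le> lpow k z"
    unfolding lpow_def using l \<Lambda> by (intro mult_mono power_mono) auto
  finally show ?thesis .
qed

lemma M_self_le:
  assumes z0: "z0 \<in> D2" and z: "z \<in> Ldisc z0"
  shows "M z z \<le> M z0 z / \<Lambda>1 ^ p"
  unfolding M_def[of z]
proof (rule weighted_max_leI[OF finite_Kp])
  fix k assume k: "k \<in> Kp"
  have "cmod (pderiv2 F (fst k) (snd k) z) / lpow k z
      \<le> cmod (pderiv2 F (fst k) (snd k) z) / (\<Lambda>1 ^ p * lpow k z0)"
    using lpow_lower[OF z0 z k] lpow_pos[OF z0, of k] lpow_pos[OF Ldisc_D2[OF z0 z], of k] \<Lambda>(1)
    by (intro divide_left_mono) auto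
  also have "\<dots> \<le> M z0 z / \<Lambda>1 ^ p"
    using norm_pderiv2_le_M[OF z0 k, of z] lpow_pos[OF z0, of k] \<Lambda>(1)
    by (simp add: field_simps)
  finally show "cmod (pderiv2 F (fst k) (snd k) z) / lpow k z \<le> M z0 z / \<Lambda>1 ^ p" .
qed (use zero_in_Kp in auto)

lemma criterion_M:
  assumes z: "z \<in> D2" and j: "fst j + snd j = p + 1"
  shows "cmod (pderiv2 F (fst j) (snd j) z) / lpow j z \<le> c * M z z"
proof -
  have eq: "(\<lambda>(k1, k2). cmod (pderiv2 F k1 k2 z) / (l1 z ^ k1 * l2 z ^ k2))
      = (\<lambda>k. cmod (pderiv2 F (fst k) (snd k) z) / lpow k z)"
    by (auto simp: lpow_def)
  from criterion z have "Max ((\<lambda>(j1, j2). cmod (pderiv2 F j1 j2 z) / (l1 z ^ j1 * l2 z ^ j2)) ` {(j1, j2). j1 + j2 = p + 1})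
      \<le> c * Max ((\<lambda>(k1, k2). cmod (pderiv2 F k1 k2 z) / (l1 z ^ k1 * l2 z ^ k2)) ` {(k1, k2). k1 + k2 \<le> p})"
    unfolding derivative_criterion_def by blast
  then have "Max ((\<lambda>k. cmod (pderiv2 F (fst k) (snd k) z) / lpow k z) ` {(j1, j2). j1 + j2 = p + 1}) \<le> c * M z z"
    unfolding eq M_def weighted_max_def Kp_def .
  moreover have "cmod (pderiv2 F (fst j) (snd j) z) / lpow j z
      \<le> Max ((\<lambda>k. cmod (pderiv2 F (fst k) (snd k) z) / lpow k z) ` {(j1, j2). j1 + j2 = p + 1})"
    using j finite_pairs_sum_eq[of "p + 1"] by (intro Max_ge) (auto simp: split_beta)
  ultimately show ?thesis
    by linarith
qed

lemma norm_pderiv2_le_M_self: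
  assumes z: "z \<in> D2" and j: "fst j + snd j \<le> p + 1"
  shows "cmod (pderiv2 F (fst j) (snd j) z) \<le> max c 1 * lpow j z * M z z"
proof -
  have "cmod (pderiv2 F (fst j) (snd j) z) / lpow j z \<le> max c 1 * M z z"
  proof (cases "fst j + snd j = p + 1")
    case True
    then have "cmod (pderiv2 F (fst j) (snd j) z) / lpow j z \<le> c * M z z"
      by (rule criterion_M[OF z])
    also have "\<dots> \<le> max c 1 * M z z"
      by (rule mult_right_mono[OF max.cobounded1 M_nonneg[OF z]])
    finally show ?thesis .
  next
    case False
    with j have "j \<in> Kp"
      by (auto simp: Kp_def)
    then have "cmod (pderiv2 F (fst j) (snd j) z) / lpow j z \<le> M z z"
      using weighted_max_ge[OF finite_Kp] by (simp add: M_def)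
    also have "\<dots> \<le> max c 1 * M z z"
      using mult_right_mono[OF max.cobounded2[of 1 c] M_nonneg[OF z, of z]] by simp
    finally show ?thesis .
  qed
  then show ?thesis
    using lpow_pos[OF z, of j] by (simp add: field_simps)
qed

lemma norm_pderiv2_le_A:
  assumes z0: "z0 \<in> D2" and z: "z \<in> Ldisc z0" and j: "fst j + snd j \<le> p + 1"
  shows "cmod (pderiv2 F (fst j) (snd j) z) \<le> A * lpow j z0 * M z0 z"
proof -
  have zD: "z \<in> D2"
    by (rule Ldisc_D2[OF z0 z])
  have "cmod (pderiv2 F (fst j) (snd j) z) \<le> max c 1 * lpow j z * M z z"
    by (rule norm_pderiv2_le_M_self[OF zD j])
  also have "\<dots> \<le> max c 1 * (\<Lambda>2 ^ (p + 1) * lpow j z0) * (M z0 z / \<Lambda>1 ^ p)"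
    using lpow_upper[OF z0 z j] M_self_le[OF z0 z] M_nonneg[OF zD, of z] lpow_pos[OF zD, of j]
    by (intro mult_mono mult_left_mono) auto
  also have "\<dots> = A * lpow j z0 * M z0 z"
    by (simp add: A_def)
  finally show ?thesis .
qed

lemma Ldisc_radius_le_steps: "0 < l \<Longrightarrow> \<beta> / l \<le> real N * (1 / (2 * A * l))"
  using real_nat_ceiling_ge[of "2 * A * \<beta>"] A_ge_1 by (simp add: N_def field_simps)

text \<open>Along each coordinate direction, \<open>norm_pderiv2_le_A\<close> is exactly the derivative control
  required by \<open>weighted_max_growth\<close>, with constant \<open>A l\<^sub>j(z0)\<close>; the radius \<open>\<beta>/l\<^sub>j(z0)\<close> is
  covered by \<open>N\<close> steps of length \<open>1/(2 A l\<^sub>j(z0))\<close>.\<close>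

lemma M_growth_fst:
  assumes z0: "z0 \<in> D2" and u: "cmod (u - fst z0) \<le> \<beta> / l1 z0"
  shows "M z0 (u, snd z0) \<le> 2 ^ N * M z0 z0"
proof -
  have l: "0 < l1 z0" "0 < l2 z0"
    using l_pos[OF z0] by auto
  have in_Ldisc: "(v, snd z0) \<in> Ldisc z0" if "v \<in> cball (fst z0) (\<beta> / l1 z0)" for v
    using that l \<beta> by (auto simp: polydisc_def dist_norm norm_minus_commute)
  have "weighted_max (\<lambda>k. pderiv2 F (fst k) (snd k) (u, snd z0)) (\<lambda>k. lpow k z0) Kp
      \<le> 2 ^ N * weighted_max (\<lambda>k. pderiv2 F (fst k) (snd k) (fst z0, snd z0)) (\<lambda>k. lpow k z0) Kp"
  proof (rule weighted_max_growth[OF finite_Kp _ convex_cball compact_cball,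
        where h' = "\<lambda>k v. pderiv2 F (Suc (fst k)) (snd k) (v, snd z0)" and B = "A * l1 z0"
          and \<rho> = "1 / (2 * A * l1 z0)"])
    fix k v assume k: "k \<in> Kp" and v: "v \<in> cball (fst z0) (\<beta> / l1 z0)"
    show "((\<lambda>v. pderiv2 F (fst k) (snd k) (v, snd z0)) has_field_derivative
        pderiv2 F (Suc (fst k)) (snd k) (v, snd z0)) (at v)"
      using D2_imp_in_ball[OF Ldisc_D2[OF z0 in_Ldisc[OF v]]] by (intro has_field_derivative_pderiv2_fst) auto
    have "fst (Suc (fst k), snd k) + snd (Suc (fst k), snd k) \<le> p + 1"
      using k by (auto simp: Kp_def)
    from norm_pderiv2_le_A[OF z0 in_Ldisc[OF v] this]
    show "cmod (pderiv2 F (Suc (fst k)) (snd k) (v, snd z0))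
        \<le> A * l1 z0 * lpow k z0 * weighted_max (\<lambda>j. pderiv2 F (fst j) (snd j) (v, snd z0)) (\<lambda>k. lpow k z0) Kp"
      by (simp add: lpow_def M_def algebra_simps)
  qed (use zero_in_Kp l \<beta> A_ge_1 lpow_pos[OF z0] Ldisc_radius_le_steps[of "l1 z0"] u in
        \<open>auto simp: dist_norm norm_minus_commute\<close>)
  then show ?thesis
    by (simp add: M_def)
qed

lemma M_growth_snd:
  assumes z0: "z0 \<in> D2" and u: "cmod (u - fst z0) \<le> \<beta> / l1 z0" and w: "cmod (w - snd z0) \<le> \<beta> / l2 z0"
  shows "M z0 (u, w) \<le> 2 ^ N * M z0 (u, snd z0)"
proof -
  have l: "0 < l1 z0" "0 < l2 z0"
    using l_pos[OF z0] by auto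
  have in_Ldisc: "(u, v) \<in> Ldisc z0" if "v \<in> cball (snd z0) (\<beta> / l2 z0)" for v
    using that u by (auto simp: polydisc_def dist_norm norm_minus_commute)
  have "weighted_max (\<lambda>k. pderiv2 F (fst k) (snd k) (u, w)) (\<lambda>k. lpow k z0) Kp
      \<le> 2 ^ N * weighted_max (\<lambda>k. pderiv2 F (fst k) (snd k) (u, snd z0)) (\<lambda>k. lpow k z0) Kp"
  proof (rule weighted_max_growth[OF finite_Kp _ convex_cball compact_cball,
        where h' = "\<lambda>k v. pderiv2 F (fst k) (Suc (snd k)) (u, v)" and B = "A * l2 z0"
          and \<rho> = "1 / (2 * A * l2 z0)"])
    fix k v assume k: "k \<in> Kp" and v: "v \<in> cball (snd z0) (\<beta> / l2 z0)"
    show "((\<lambda>v. pderiv2 F (fst k) (snd k) (u, v)) has_field_derivative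
        pderiv2 F (fst k) (Suc (snd k)) (u, v)) (at v)"
      using D2_imp_in_ball[OF Ldisc_D2[OF z0 in_Ldisc[OF v]]] by (intro has_field_derivative_pderiv2_snd) auto
    have "fst (fst k, Suc (snd k)) + snd (fst k, Suc (snd k)) \<le> p + 1"
      using k by (auto simp: Kp_def)
    from norm_pderiv2_le_A[OF z0 in_Ldisc[OF v] this]
    show "cmod (pderiv2 F (fst k) (Suc (snd k)) (u, v))
        \<le> A * l2 z0 * lpow k z0 * weighted_max (\<lambda>j. pderiv2 F (fst j) (snd j) (u, v)) (\<lambda>k. lpow k z0) Kp"
      by (simp add: lpow_def M_def algebra_simps)
  qed (use zero_in_Kp l \<beta> A_ge_1 lpow_pos[OF z0] Ldisc_radius_le_steps[of "l2 z0"] w in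
        \<open>auto simp: dist_norm norm_minus_commute\<close>)
  then show ?thesis
    by (simp add: M_def)
qed

lemma M_le_on_Ldisc:
  assumes z0: "z0 \<in> D2" and z: "z \<in> Ldisc z0"
  shows "M z0 z \<le> 4 ^ N * M z0 z0"
proof -
  have u: "cmod (fst z - fst z0) \<le> \<beta> / l1 z0" and w: "cmod (snd z - snd z0) \<le> \<beta> / l2 z0"
    using z by (auto simp: polydisc_def)
  have "M z0 z \<le> 2 ^ N * M z0 (fst z, snd z0)"
    using M_growth_snd[OF z0 u w] by simp
  also have "\<dots> \<le> 2 ^ N * (2 ^ N * M z0 z0)"
    using M_growth_fst[OF z0 u] by simp
  also have "\<dots> = 4 ^ N * M z0 z0"
    by (simp add: power_mult_distrib[symmetric])
  finally show ?thesis .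
qed

lemma norm_pderiv2_high_order:
  assumes z0: "z0 \<in> D2" and k: "(k1, k2) \<in> Kp"
  shows "cmod (pderiv2 F (k1 + s1) (k2 + s2) z0)
    \<le> fact s1 * fact s2 * (lpow (k1, k2) z0 * (4 ^ N * M z0 z0)) / ((\<beta> / l1 z0) ^ s1 * (\<beta> / l2 z0) ^ s2)"
proof -
  have l: "0 < l1 z0" "0 < l2 z0"
    using l_pos[OF z0] by auto
  have in_Ldisc: "(u, v) \<in> Ldisc z0" if "u \<in> cball (fst z0) (\<beta> / l1 z0)" "v \<in> cball (snd z0) (\<beta> / l2 z0)" for u v
    using that by (auto simp: polydisc_def dist_norm norm_minus_commute)
  have centres: "fst z0 \<in> cball (fst z0) (\<beta> / l1 z0)" "snd z0 \<in> cball (snd z0) (\<beta> / l2 z0)"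
    using l \<beta> by auto
  have balls: "cball (fst z0) (\<beta> / l1 z0) \<subseteq> ball 0 1" "cball (snd z0) (\<beta> / l2 z0) \<subseteq> ball 0 1"
    using D2_imp_in_ball[OF Ldisc_D2[OF z0 in_Ldisc[OF _ centres(2)]]]
      D2_imp_in_ball[OF Ldisc_D2[OF z0 in_Ldisc[OF centres(1)]]] by auto
  have "cmod (pderiv2 F (k1 + s1) (k2 + s2) (fst z0, snd z0))
    \<le> fact s1 * fact s2 * (lpow (k1, k2) z0 * (4 ^ N * M z0 z0)) / ((\<beta> / l1 z0) ^ s1 * (\<beta> / l2 z0) ^ s2)"
  proof (rule norm_pderiv2_add_le[OF balls])
    fix u v assume "u \<in> cball (fst z0) (\<beta> / l1 z0)" "v \<in> cball (snd z0) (\<beta> / l2 z0)"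
    with in_Ldisc have uv: "(u, v) \<in> Ldisc z0"
      by blast
    have "cmod (pderiv2 F k1 k2 (u, v)) \<le> lpow (k1, k2) z0 * M z0 (u, v)"
      using norm_pderiv2_le_M[OF z0 k] by simp
    also have "\<dots> \<le> lpow (k1, k2) z0 * (4 ^ N * M z0 z0)"
      using M_le_on_Ldisc[OF z0 uv] lpow_pos[OF z0] by (simp add: less_imp_le)
    finally show "cmod (pderiv2 F k1 k2 (u, v)) \<le> lpow (k1, k2) z0 * (4 ^ N * M z0 z0)" .
  qed (use l \<beta> in auto)
  then show ?thesis
    by simp
qed

lemma index_ratio_high_order:
  assumes z: "z \<in> D2" and k: "(k1, k2) \<in> Kp"
  shows "index_ratio l1 l2 F z (k1 + s1, k2 + s2) \<le> 4 ^ N * M z z / \<beta> ^ (s1 + s2)"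
proof -
  have l: "0 < l1 z" "0 < l2 z"
    using l_pos[OF z] by auto
  define Q where "Q = 4 ^ N * M z z / \<beta> ^ (s1 + s2)"
  have Q: "0 \<le> Q"
    using M_nonneg[OF z, of z] \<beta> by (simp add: Q_def)
  have "cmod (pderiv2 F (k1 + s1) (k2 + s2) z) \<le> fact s1 * fact s2 * Q * (l1 z ^ (k1 + s1) * l2 z ^ (k2 + s2))"
    using norm_pderiv2_high_order[OF z k, of s1 s2] l \<beta>
    by (simp add: Q_def lpow_def power_divide power_add field_simps)
  then have "index_ratio l1 l2 F z (k1 + s1, k2 + s2)
      \<le> (fact s1 / fact (k1 + s1)) * (fact s2 / fact (k2 + s2)) * Q"
    using l by (simp add: index_ratio_def field_simps)
  also have "\<dots> \<le> 1 * 1 * Q"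
    using Q by (intro mult_right_mono mult_mono) (auto simp: fact_mono)
  finally show ?thesis
    by (simp add: Q_def)
qed

lemma M_self_le_index_ratio:
  assumes z: "z \<in> D2"
  shows "M z z \<le> fact p * Max (index_ratio l1 l2 F z ` Kp)"
  unfolding M_def
proof (rule weighted_max_leI[OF finite_Kp])
  fix k assume k: "k \<in> Kp"
  have "fact (fst k) * fact (snd k) \<le> (fact (fst k + snd k) :: real)"
    by (rule fact_mult_le_fact_add)
  also have "\<dots> \<le> fact p"
    using k by (intro fact_mono) (auto simp: Kp_def)
  finally have "fact (fst k) * fact (snd k) \<le> (fact p :: real)" .
  moreover have "index_ratio l1 l2 F z k \<le> Max (index_ratio l1 l2 F z ` Kp)"
    using k finite_Kp by (intro Max_ge) auto
  moreover have "cmod (pderiv2 F (fst k) (snd k) z) / lpow k z = fact (fst k) * fact (snd k) * index_ratio l1 l2 F z k"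
    using l_pos[OF z] by (simp add: index_ratio_def lpow_def)
  ultimately show "cmod (pderiv2 F (fst k) (snd k) z) / lpow k z \<le> fact p * Max (index_ratio l1 l2 F z ` Kp)"
    using index_ratio_nonneg[of l1 z l2 F k] l_pos[OF z] by (simp add: mult_mono)
qed (use zero_in_Kp in auto)

lemma index_ratio_high_order_le_Max:
  assumes z: "z \<in> D2" and k: "(k1, k2) \<in> Kp" and s: "4 ^ N * fact p \<le> \<beta> ^ (s1 + s2)"
  shows "index_ratio l1 l2 F z (k1 + s1, k2 + s2) \<le> Max (index_ratio l1 l2 F z ` Kp)"
proof -
  define Mp where "Mp = Max (index_ratio l1 l2 F z ` Kp)"
  have "0 \<le> index_ratio l1 l2 F z (0, 0)"
    using index_ratio_nonneg l_pos[OF z] by (simp add: less_imp_le)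
  also have "\<dots> \<le> Mp"
    unfolding Mp_def using finite_Kp zero_in_Kp by (intro Max_ge) auto
  finally have Mp: "0 \<le> Mp" .
  have "index_ratio l1 l2 F z (k1 + s1, k2 + s2) \<le> 4 ^ N * M z z / \<beta> ^ (s1 + s2)"
    by (rule index_ratio_high_order[OF z k])
  also have "\<dots> \<le> (4 ^ N * fact p) * Mp / \<beta> ^ (s1 + s2)"
    using M_self_le_index_ratio[OF z] \<beta> by (simp add: Mp_def divide_right_mono mult.assoc)
  also have "\<dots> \<le> \<beta> ^ (s1 + s2) * Mp / \<beta> ^ (s1 + s2)"
    using s \<beta> Mp by (intro divide_right_mono mult_right_mono) auto
  also have "\<dots> = Mp"
    using \<beta> by simp
  finally show ?thesis
    by (simp add: Mp_def)
qed

theorem bounded_L_index: "bounded_L_index l1 l2 F"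
proof -
  obtain m where m: "4 ^ N * fact p < \<beta> ^ m"
    using real_arch_pow[OF \<beta>] by blast
  have "index_ratio l1 l2 F z j \<le> Max (index_ratio l1 l2 F z ` {(k1, k2). k1 + k2 \<le> p + m})"
    if z: "z \<in> D2" for z j
  proof (cases "fst j + snd j \<le> p + m")
    case True
    then show ?thesis
      using finite_pairs_sum_le[of "p + m"] by (intro Max_ge) (auto simp: split_beta)
  next
    case False
    define k1 where "k1 = min (fst j) p"
    define s1 where "s1 = fst j - k1"
    define s2 where "s2 = snd j - (p - k1)"
    have j: "j = (k1 + s1, (p - k1) + s2)" and k: "(k1, p - k1) \<in> Kp" and s: "m \<le> s1 + s2"
      using False by (auto simp: k1_def s1_def s2_def Kp_def)
    have "\<beta> ^ m \<le> \<beta> ^ (s1 + s2)"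
      using s \<beta> by (intro power_increasing) auto
    with m have "4 ^ N * fact p \<le> \<beta> ^ (s1 + s2)"
      by simp
    then have "index_ratio l1 l2 F z j \<le> Max (index_ratio l1 l2 F z ` Kp)"
      unfolding j by (rule index_ratio_high_order_le_Max[OF z k])
    also have "\<dots> \<le> Max (index_ratio l1 l2 F z ` {(k1, k2). k1 + k2 \<le> p + m})"
    proof (rule Max_mono[OF image_mono])
      show "Kp \<subseteq> {(k1, k2). k1 + k2 \<le> p + m}"
        by (auto simp: Kp_def)
    qed (use zero_in_Kp finite_pairs_sum_le[of "p + m"] in blast)+
    finally show ?thesis .
  qed
  then show ?thesis
    unfolding bounded_L_index_iff by blast
qed

end

section \<open>Necessity of the criterion and the main theorem\<close>

lemma index_ratio_le_scaled:
  assumes "0 < l1 z" "0 < l2 z"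
  shows "index_ratio l1 l2 F z (k1, k2) \<le> cmod (pderiv2 F k1 k2 z) / (l1 z ^ k1 * l2 z ^ k2)"
proof -
  have "1 * (l1 z ^ k1 * l2 z ^ k2) \<le> fact k1 * fact k2 * (l1 z ^ k1 * l2 z ^ k2)"
    using assms by (intro mult_right_mono) (auto intro: order.trans[OF _ mult_mono[OF fact_ge_1 fact_ge_1]])
  then show ?thesis
    using assms by (simp add: index_ratio_def divide_left_mono mult.assoc)
qed

lemma Max_index_ratio_le_Max_scaled:
  assumes l: "0 < l1 z" "0 < l2 z"
  shows "Max (index_ratio l1 l2 F z ` {(k1, k2). k1 + k2 \<le> n})
    \<le> Max ((\<lambda>(k1, k2). cmod (pderiv2 F k1 k2 z) / (l1 z ^ k1 * l2 z ^ k2)) ` {(k1, k2). k1 + k2 \<le> n})"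
    (is "Max (?I ` ?K) \<le> Max (?S ` ?K)")
proof (rule Max.boundedI)
  have K: "finite ?K" "(0, 0) \<in> ?K"
    using finite_pairs_sum_le[of n] by auto
  then show "finite (?I ` ?K)" "?I ` ?K \<noteq> {}"
    by blast+
  fix t assume "t \<in> ?I ` ?K"
  then obtain k1 k2 where k: "(k1, k2) \<in> ?K" and t: "t = ?I (k1, k2)"
    by auto
  have "t \<le> ?S (k1, k2)"
    using t index_ratio_le_scaled[of l1 z l2] l by simp
  also have "\<dots> \<le> Max (?S ` ?K)"
    using K k by (intro Max_ge) auto
  finally show "t \<le> Max (?S ` ?K)" .
qed

lemma bounded_L_index_imp_criterion:
  assumes bounded: "bounded_L_index l1 l2 F" and l_pos: "\<And>z. z \<in> D2 \<Longrightarrow> 0 < l1 z \<and> 0 < l2 z"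
  shows "\<exists>p c. 0 \<le> c \<and> derivative_criterion l1 l2 F p c"
proof -
  obtain n0 where n0: "\<And>z k. z \<in> D2 \<Longrightarrow>
      index_ratio l1 l2 F z k \<le> Max (index_ratio l1 l2 F z ` {(k1, k2). k1 + k2 \<le> n0})"
    using bounded unfolding bounded_L_index_iff by blast
  have "Max ((\<lambda>(j1, j2). cmod (pderiv2 F j1 j2 z) / (l1 z ^ j1 * l2 z ^ j2)) ` {(j1, j2). j1 + j2 = n0 + 1})
       \<le> fact (n0 + 1) * Max ((\<lambda>(k1, k2). cmod (pderiv2 F k1 k2 z) / (l1 z ^ k1 * l2 z ^ k2)) ` {(k1, k2). k1 + k2 \<le> n0})"
    (is "Max (?S ` ?J) \<le> _ * Max (?S ` ?K)") if z: "z \<in> D2" for z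
  proof (rule Max.boundedI)
    show "finite (?S ` ?J)"
      using finite_pairs_sum_eq[of "n0 + 1"] by simp
    have "(0, n0 + 1) \<in> ?J"
      by simp
    then show "?S ` ?J \<noteq> {}"
      by blast
  next
    have l: "0 < l1 z" "0 < l2 z"
      using l_pos[OF z] by auto
    have "0 \<le> index_ratio l1 l2 F z (0, 0)"
      using l by (simp add: index_ratio_nonneg)
    also have "\<dots> \<le> Max (index_ratio l1 l2 F z ` ?K)"
      by (rule n0[OF z])
    finally have Max_nonneg: "0 \<le> Max (index_ratio l1 l2 F z ` ?K)" .
    fix t assume "t \<in> ?S ` ?J"
    then obtain a b where ab: "a + b = n0 + 1" and t: "t = ?S (a, b)"
      by auto
    have "t = fact a * fact b * index_ratio l1 l2 F z (a, b)"
      using t l by (simp add: index_ratio_def)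
    also have "\<dots> \<le> fact (n0 + 1) * Max (index_ratio l1 l2 F z ` ?K)"
      using fact_mult_le_fact_add[of a b] ab n0[OF z, of "(a, b)"] Max_nonneg l
      by (intro mult_mono) (auto simp: index_ratio_def)
    also have "\<dots> \<le> fact (n0 + 1) * Max (?S ` ?K)"
      using Max_index_ratio_le_Max_scaled[of l1 z l2] l by (intro mult_left_mono) auto
    finally show "t \<le> fact (n0 + 1) * Max (?S ` ?K)" .
  qed
  then show ?thesis
    unfolding derivative_criterion_def by (intro exI[of _ n0] exI[of _ "fact (n0 + 1)"]) auto
qed

lemma lambda_bounds:
  assumes "0 < lambda1 l1 l2 lj R" "lambda1 l1 l2 lj R \<le> lambda2 l1 l2 lj R" "lambda2 l1 l2 lj R < \<infinity>"
  obtains x1 x2 where "0 < x1"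
    and "\<And>z0 z. z0 \<in> D2 \<Longrightarrow> z \<in> D2 \<inter> polydisc z0 (fst R / l1 z0, snd R / l2 z0) \<Longrightarrow>
           x1 \<le> lj z / lj z0 \<and> lj z / lj z0 \<le> x2"
proof -
  obtain x1 where x1: "lambda1 l1 l2 lj R = ereal x1"
    using assms by (cases "lambda1 l1 l2 lj R") auto
  obtain x2 where x2: "lambda2 l1 l2 lj R = ereal x2"
    using assms by (cases "lambda2 l1 l2 lj R") auto
  have "x1 \<le> lj z / lj z0 \<and> lj z / lj z0 \<le> x2"
    if z0: "z0 \<in> D2" and z: "z \<in> D2 \<inter> polydisc z0 (fst R / l1 z0, snd R / l2 z0)" for z0 z
  proof -
    have "lambda1 l1 l2 lj R \<le> ereal (lj z / lj z0)"
      unfolding lambda1_def by (rule INF_lower2[OF z0]) (rule INF_lower[OF z])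
    moreover have "ereal (lj z / lj z0) \<le> lambda2 l1 l2 lj R"
      unfolding lambda2_def by (rule SUP_upper2[OF z0]) (rule SUP_upper[OF z])
    ultimately show ?thesis
      using x1 x2 by simp
  qed
  moreover have "0 < x1"
    using assms(1) x1 by simp
  ultimately show ?thesis
    using that by blast
qed

lemma Q2_imp_l_ratio:
  assumes Q: "Q2 \<beta> l1 l2" and \<beta>: "0 \<le> \<beta>" and l_pos: "\<And>z. z \<in> D2 \<Longrightarrow> 0 < l1 z \<and> 0 < l2 z"
  obtains \<Lambda>1 \<Lambda>2 where "0 < \<Lambda>1" "\<Lambda>1 \<le> 1" "1 \<le> \<Lambda>2"
    and "\<And>z0 z. z0 \<in> D2 \<Longrightarrow> z \<in> D2 \<inter> polydisc z0 (\<beta> / l1 z0, \<beta> / l2 z0) \<Longrightarrow>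
           \<Lambda>1 * l1 z0 \<le> l1 z \<and> l1 z \<le> \<Lambda>2 * l1 z0 \<and> \<Lambda>1 * l2 z0 \<le> l2 z \<and> l2 z \<le> \<Lambda>2 * l2 z0"
proof -
  have "\<forall>lj\<in>{l1, l2}. 0 < lambda1 l1 l2 lj (\<beta>, \<beta>) \<and> lambda1 l1 l2 lj (\<beta>, \<beta>) \<le> lambda2 l1 l2 lj (\<beta>, \<beta>)
      \<and> lambda2 l1 l2 lj (\<beta>, \<beta>) < \<infinity>"
    using Q \<beta> unfolding Q2_def by blast
  then have l1: "0 < lambda1 l1 l2 l1 (\<beta>, \<beta>)" "lambda1 l1 l2 l1 (\<beta>, \<beta>) \<le> lambda2 l1 l2 l1 (\<beta>, \<beta>)"
      "lambda2 l1 l2 l1 (\<beta>, \<beta>) < \<infinity>"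
    and l2: "0 < lambda1 l1 l2 l2 (\<beta>, \<beta>)" "lambda1 l1 l2 l2 (\<beta>, \<beta>) \<le> lambda2 l1 l2 l2 (\<beta>, \<beta>)"
      "lambda2 l1 l2 l2 (\<beta>, \<beta>) < \<infinity>"
    by auto
  obtain x1 x2 where x: "0 < x1" "\<And>z0 z. z0 \<in> D2 \<Longrightarrow> z \<in> D2 \<inter> polydisc z0 (\<beta> / l1 z0, \<beta> / l2 z0) \<Longrightarrow>
      x1 \<le> l1 z / l1 z0 \<and> l1 z / l1 z0 \<le> x2"
    using lambda_bounds[OF l1] by auto
  obtain y1 y2 where y: "0 < y1" "\<And>z0 z. z0 \<in> D2 \<Longrightarrow> z \<in> D2 \<inter> polydisc z0 (\<beta> / l1 z0, \<beta> / l2 z0) \<Longrightarrow>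
      y1 \<le> l2 z / l2 z0 \<and> l2 z / l2 z0 \<le> y2"
    using lambda_bounds[OF l2] by auto
  show ?thesis
  proof (rule that[of "min 1 (min x1 y1)" "max 1 (max x2 y2)"])
    fix z0 z assume z0: "z0 \<in> D2" and z: "z \<in> D2 \<inter> polydisc z0 (\<beta> / l1 z0, \<beta> / l2 z0)"
    have "min 1 (min x1 y1) \<le> l1 z / l1 z0" "l1 z / l1 z0 \<le> max 1 (max x2 y2)"
      "min 1 (min x1 y1) \<le> l2 z / l2 z0" "l2 z / l2 z0 \<le> max 1 (max x2 y2)"
      using x(2)[OF z0 z] y(2)[OF z0 z] by auto
    then show "min 1 (min x1 y1) * l1 z0 \<le> l1 z \<and> l1 z \<le> max 1 (max x2 y2) * l1 z0 \<and>
        min 1 (min x1 y1) * l2 z0 \<le> l2 z \<and> l2 z \<le> max 1 (max x2 y2) * l2 z0"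
      using l_pos[OF z0] by (simp add: field_simps)
  qed (use x(1) y(1) in auto)
qed

lemma pos_if_gt_div:
  assumes "0 < \<beta>" "cmod x < 1" "\<beta> / (1 - cmod x) < l"
  shows "0 < l"
  using assms by (smt (verit) divide_pos_pos)

lemma polydisc_subset_D2:
  assumes z0: "z0 \<in> D2" and "0 < \<beta>"
    and "\<beta> / (1 - cmod (fst z0)) < l1 z0" "\<beta> / (1 - cmod (snd z0)) < l2 z0"
  shows "polydisc z0 (\<beta> / l1 z0, \<beta> / l2 z0) \<subseteq> D2"
proof
  fix z assume z: "z \<in> polydisc z0 (\<beta> / l1 z0, \<beta> / l2 z0)"
  have d: "0 < 1 - cmod (fst z0)" "0 < 1 - cmod (snd z0)"
    using z0 by (auto simp: D2_def)
  have "0 < l1 z0" "0 < l2 z0"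
    using assms by (auto simp: D2_def intro: pos_if_gt_div)
  with assms(3,4) d have "\<beta> / l1 z0 < 1 - cmod (fst z0)" "\<beta> / l2 z0 < 1 - cmod (snd z0)"
    by (simp_all add: field_simps)
  moreover have "cmod (fst z) \<le> cmod (fst z0) + cmod (fst z - fst z0)"
    "cmod (snd z) \<le> cmod (snd z0) + cmod (snd z - snd z0)"
    using norm_triangle_sub[of "fst z" "fst z0"] norm_triangle_sub[of "snd z" "snd z0"] by auto
  ultimately show "z \<in> D2"
    using z by (auto simp: polydisc_def D2_def)
qed

theorem theorem6:
  fixes \<beta> :: real
    and l1 l2 :: "complex \<times> complex \<Rightarrow> real"
    and F :: "complex \<times> complex \<Rightarrow> complex"
  assumes beta: "\<beta> > 1"
    and l1_cont: "continuous_on D2 l1" and l2_cont: "continuous_on D2 l2"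
    and l1_nonneg: "\<forall>z\<in>D2. l1 z \<ge> 0" and l2_nonneg: "\<forall>z\<in>D2. l2 z \<ge> 0"
    and l1_gt: "\<forall>z\<in>D2. l1 z > \<beta> / (1 - cmod (fst z))"
    and l2_gt: "\<forall>z\<in>D2. l2 z > \<beta> / (1 - cmod (snd z))"
    and LQ: "Q2 \<beta> l1 l2"
    and F_an: "analytic2_on F D2"
  shows "bounded_L_index l1 l2 F \<longleftrightarrow>
    (\<exists>(p::nat) (c::real). c \<ge> 0 \<and> (\<forall>z\<in>D2.
       Max ((\<lambda>(j1, j2). cmod (pderiv2 F j1 j2 z) / (l1 z ^ j1 * l2 z ^ j2))
              ` {(j1, j2). j1 + j2 = p + 1})
       \<le> c * Max ((\<lambda>(k1, k2). cmod (pderiv2 F k1 k2 z) / (l1 z ^ k1 * l2 z ^ k2))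
              ` {(k1, k2). k1 + k2 \<le> p})))"
proof -
  have Ldisc_D2: "polydisc z0 (\<beta> / l1 z0, \<beta> / l2 z0) \<subseteq> D2" if "z0 \<in> D2" for z0
    using polydisc_subset_D2[OF that] beta l1_gt l2_gt that by simp
  have l_pos: "0 < l1 z \<and> 0 < l2 z" if "z \<in> D2" for z
    using pos_if_gt_div[OF _ _ bspec[OF l1_gt that]] pos_if_gt_div[OF _ _ bspec[OF l2_gt that]] beta that
    by (simp add: D2_def)
  obtain \<Lambda>1 \<Lambda>2 where \<Lambda>: "0 < \<Lambda>1" "\<Lambda>1 \<le> 1" "1 \<le> \<Lambda>2"
    and l_ratio: "\<And>z0 z. z0 \<in> D2 \<Longrightarrow> z \<in> D2 \<inter> polydisc z0 (\<beta> / l1 z0, \<beta> / l2 z0) \<Longrightarrow>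
           \<Lambda>1 * l1 z0 \<le> l1 z \<and> l1 z \<le> \<Lambda>2 * l1 z0 \<and> \<Lambda>1 * l2 z0 \<le> l2 z \<and> l2 z \<le> \<Lambda>2 * l2 z0"
    using Q2_imp_l_ratio[OF LQ _ l_pos] beta by auto
  interpret separately_holomorphic F
    by (rule analytic2_on_D2_imp_separately_holomorphic[OF F_an])
  show ?thesis
    unfolding derivative_criterion_def[symmetric]
  proof
    assume "bounded_L_index l1 l2 F"
    then show "\<exists>p c. 0 \<le> c \<and> derivative_criterion l1 l2 F p c"
      by (rule bounded_L_index_imp_criterion[OF _ l_pos])
  next
    assume "\<exists>p c. 0 \<le> c \<and> derivative_criterion l1 l2 F p c"
    then obtain p c where "0 \<le> c" "derivative_criterion l1 l2 F p c"
      by blast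
    then interpret L_index_criterion F l1 l2 \<beta> \<Lambda>1 \<Lambda>2 c p
      using beta l_pos Ldisc_D2 \<Lambda> l_ratio by unfold_locales blast+
    show "bounded_L_index l1 l2 F"
      by (rule bounded_L_index)
  qed
qed

end
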